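(* Let $(S,V)$ be a complete semiring-semimodule pair, let $S'\subseteq S$ contain $0$ and $1$, and let $\mathcal P=(n,\Gamma,I,M,P,p_0,l)$ be an $S'$-$\omega$-pushdown automaton. Set $x_0=I(M^* )_{p_0,\epsilon}P\in S$, $[i,p,j]=((M^* )_{p,\epsilon})_{i,j}\in S$, $z_0=I(M^{\omega,l})_{p_0}\in V$ and $[i,p]=((M^{\omega,l})_p)_i\in V$ for $p\in\Gamma$, $1\le i,j\le n$. Then these values satisfy the system $$x_0=\sum_{1\le m_1,m_2\le n}I_{m_1}[m_1,p_0,m_2]P_{m_2},$$ $$[i,p,j]=\sum_{k\ge0}\sum_{p_1,\dots,p_k\in\Gamma}\sum_{1\le m_1,\dots,m_k\le n}(M_{p,p_1\dots p_k})_{i,m_1}[m_1,p_1,m_2][m_2,p_2,m_3]\cdots[m_k,p_k,j]\quad(p\in\Gamma,\ 1\le i,j\le n),$$ $$z_0=\sum_{1\le m\le n}I_m[m,p_0],$$ $$[i,p]=\sum_{k\ge1}\sum_{p_1,\dots,p_k\in\Gamma}\sum_{1\le j\le k}\sum_{1\le m_1,\dots,m_j\le n}(M_{p,p_1\dots p_k})_{i,m_1}[m_1,p_1,m_2]\cdots[m_{j-1},p_{j-1},m_j][m_j,p_j]\quad(p\in\Gamma,\ 1\le i\le n)$$ (this solution is called the solution of order $l$), and $\|\mathcal P\|=(I(M^* )_{p_0,\epsilon}P,\ I(M^{\omega,l})_{p_0})$.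
   Context: A complete semiring-semimodule pair $(S,V)$ (in the sense of Ésik and Kuich, "Modern Automata Theory") consists of a complete starsemiring $S$ (arbitrary sums with infinite associativity/commutativity/distributivity laws, star $s^*=\sum_{j\ge0}s^j$) and a complete $S$-semimodule $V$, with infinite products $\prod_{j\ge1}s_j\in V$ of sequences in $S$ satisfying the axioms of that framework. In the second equation the term for $k=0$ is $(M_{p,\epsilon})_{i,j}$, and in general the last triple is $[m_k,p_k,j]$ (i.e. $m_{k+1}=j$). A pushdown transition matrix $M\in (S'^{n\times n})^{\Gamma^*\times\Gamma^*}$ ($\Gamma^*\times\Gamma^*$ matrix with $n\times n$ blocks over $S'$) satisfies (i) for each $p\in\Gamma$ only finitely many blocks $M_{p,\pi}$ are nonzero, and (ii) $M_{\pi_1,\pi_2}=M_{p,\pi}$ if $\pi_1=p\pi'$, $\pi_2=\pi\pi'$ for some $p\in\Gamma$, $\pi,\pi'\in\Gamma^*$, and $0$ otherwise. An $S'$-$\omega$-pushdown automaton $\mathcal P=(n,\Gamma,I,M,P,p_0,l)$ consists of $n\ge1$ (states $1,\dots,n$), an alphabet $\Gamma$, such an $M$, $I\in S'^{1\times n}$, $P\in S'^{n\times 1}$, $p_0\in\Gamma$ and $l\in\{0,\dots,n\}$. $M^*=\sum_{m\ge0}M^m$ with blocks $(M^* )_{\pi,\pi'}$; with $P_l=\{(j_1,j_2,\dots)\in\{1,\dots,n\}^\omega\mid j_t\le l\text{ for infinitely many }t\}$, $M^{\omega,l}\in (V^n)^{\Gamma^*}$ is given by $((M^{\omega,l})_\pi)_i=\sum_{\pi_1,\pi_2,\ldots\in\Gamma^*}\sum_{(j_1,j_2,\ldots)\in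 P_l}(M_{\pi,\pi_1})_{i,j_1}(M_{\pi_1,\pi_2})_{j_1,j_2}\cdots$. The behavior $\|\mathcal P\|=I(M^* )_{p_0,\epsilon}P+I(M^{\omega,l})_{p_0}$ is viewed as the pair $(I(M^* )_{p_0,\epsilon}P,I(M^{\omega,l})_{p_0})$ in the quemiring $S\times V$. *)

theory Defs
  imports "HOL-Library.Countable"
begin

text \<open>Infinite sums are taken over index sets that are subsets of the fixed
  index type idx (of the cardinality of the continuum). Sums over index sets of
  other types are transported along a fixed injection into idx (see gsum).\<close>

type_synonym idx = "nat \<Rightarrow> nat"

definition complete_monoid :: "((idx \<Rightarrow> 'a::comm_monoid_add) \<Rightarrow> idx set \<Rightarrow> 'a) \<Rightarrow> bool" where
  "complete_monoid \<sigma> \<longleftrightarrow>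
     (\<forall>f g A. (\<forall>x\<in>A. f x = g x) \<longrightarrow> \<sigma> f A = \<sigma> g A) \<and>
     (\<forall>f A. finite A \<longrightarrow> \<sigma> f A = sum f A) \<and>
     (\<forall>f (J::idx set) (Q::idx \<Rightarrow> idx set).
        (\<forall>j\<in>J. \<forall>k\<in>J. j \<noteq> k \<longrightarrow> Q j \<inter> Q k = {}) \<longrightarrow>
        \<sigma> (\<lambda>j. \<sigma> f (Q j)) J = \<sigma> f (\<Union>j\<in>J. Q j))"

definition complete_semiring :: "((idx \<Rightarrow> 's::semiring_1) \<Rightarrow> idx set \<Rightarrow> 's) \<Rightarrow> bool" where
  "complete_semiring \<sigma> \<longleftrightarrow> complete_monoid \<sigma> \<and>
     (\<forall>c f A. \<sigma> (\<lambda>i. c * f i) A = c * \<sigma> f A) \<and>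
     (\<forall>c f A. \<sigma> (\<lambda>i. f i * c) A = \<sigma> f A * c)"

definition complete_semimodule ::
  "((idx \<Rightarrow> 's::semiring_1) \<Rightarrow> idx set \<Rightarrow> 's) \<Rightarrow> ((idx \<Rightarrow> 'v::comm_monoid_add) \<Rightarrow> idx set \<Rightarrow> 'v)
     \<Rightarrow> ('s \<Rightarrow> 'v \<Rightarrow> 'v) \<Rightarrow> bool" where
  "complete_semimodule \<sigma>S \<sigma>V act \<longleftrightarrow> complete_monoid \<sigma>V \<and>
     (\<forall>s v w. act s (v + w) = act s v + act s w) \<and>
     (\<forall>s t v. act (s + t) v = act s v + act t v) \<and>
     (\<forall>s t v. act (s * t) v = act s (act t v)) \<and>
     (\<forall>v. act 1 v = v) \<and> (\<forall>v. act 0 v = 0) \<and> (\<forall>s. act s 0 = 0) \<and>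
     (\<forall>s f A. act s (\<sigma>V f A) = \<sigma>V (\<lambda>i. act s (f i)) A) \<and>
     (\<forall>f v A. act (\<sigma>S f A) v = \<sigma>V (\<lambda>i. act (f i) v) A)"

definition gsum :: "((idx \<Rightarrow> 'a) \<Rightarrow> idx set \<Rightarrow> 'a) \<Rightarrow> ('t \<Rightarrow> idx) \<Rightarrow> ('t \<Rightarrow> 'a) \<Rightarrow> 't set \<Rightarrow> 'a" where
  "gsum \<sigma> e f A = \<sigma> (\<lambda>u. f (inv_into A e u)) (e ` A)"

definition enc_cnt :: "'a::countable \<Rightarrow> idx" where
  "enc_cnt x = (\<lambda>_. to_nat x)"

definition enc_cseq :: "(nat \<Rightarrow> 'a::countable) \<Rightarrow> idx" where
  "enc_cseq f = to_nat \<circ> f"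

definition enc_iseq :: "(nat \<Rightarrow> idx) \<Rightarrow> idx" where
  "enc_iseq F = (\<lambda>m. case prod_decode m of (a, b) \<Rightarrow> F a b)"

text \<open>Infinite products are indexed from 0: iprod s stands for s 0 * s 1 * s 2 * ...\<close>
definition complete_ssp ::
  "((idx \<Rightarrow> 's::semiring_1) \<Rightarrow> idx set \<Rightarrow> 's) \<Rightarrow> ((idx \<Rightarrow> 'v::comm_monoid_add) \<Rightarrow> idx set \<Rightarrow> 'v)
     \<Rightarrow> ('s \<Rightarrow> 'v \<Rightarrow> 'v) \<Rightarrow> ((nat \<Rightarrow> 's) \<Rightarrow> 'v) \<Rightarrow> bool" where
  "complete_ssp \<sigma>S \<sigma>V act iprod \<longleftrightarrow>
     complete_semiring \<sigma>S \<and> complete_semimodule \<sigma>S \<sigma>V act \<and>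
     (\<forall>s. iprod s = act (s 0) (iprod (\<lambda>t. s (Suc t)))) \<and>
     (\<forall>s g. strict_mono g \<and> g 0 = 0 \<longrightarrow>
        iprod s = iprod (\<lambda>t. prod_list (map s [g t..<g (Suc t)]))) \<and>
     (\<forall>(Ix :: nat \<Rightarrow> idx set) (F :: nat \<Rightarrow> idx \<Rightarrow> 's).
        iprod (\<lambda>t. \<sigma>S (F t) (Ix t)) =
        gsum \<sigma>V enc_iseq (\<lambda>h. iprod (\<lambda>t. F t (h t))) {h. \<forall>t. h t \<in> Ix t})"

text \<open>A Gamma-star x Gamma-star matrix with n x n blocks: M pi1 pi2 i j is the (i,j) entry
  of the block (pi1,pi2); states are 1..n. The block M_{p,pi} for p in Gamma is M [p] pi.\<close>
definition pushdown_matrix :: "nat \<Rightarrow> ('g list \<Rightarrow> 'g list \<Rightarrow> nat \<Rightarrow> nat \<Rightarrow> 's::zero) \<Rightarrow> bool" where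
  "pushdown_matrix n M \<longleftrightarrow>
     (\<forall>p. finite {\<pi>. \<exists>i\<in>{1..n}. \<exists>j\<in>{1..n}. M [p] \<pi> i j \<noteq> 0}) \<and>
     (\<forall>i\<in>{1..n}. \<forall>j\<in>{1..n}.
        (\<forall>p \<pi> \<pi>'. M (p # \<pi>') (\<pi> @ \<pi>') i j = M [p] \<pi> i j) \<and>
        (\<forall>\<pi>1 \<pi>2. \<not> (\<exists>p \<pi> \<pi>'. \<pi>1 = p # \<pi>' \<and> \<pi>2 = \<pi> @ \<pi>') \<longrightarrow> M \<pi>1 \<pi>2 i j = 0))"

definition omega_pda ::
  "'s::semiring_1 set \<Rightarrow> nat \<Rightarrow> ('g list \<Rightarrow> 'g list \<Rightarrow> nat \<Rightarrow> nat \<Rightarrow> 's) \<Rightarrow> (nat \<Rightarrow> 's) \<Rightarrow> (nat \<Rightarrow> 's)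
     \<Rightarrow> 'g \<Rightarrow> nat \<Rightarrow> bool" where
  "omega_pda S' n M I P p0 l \<longleftrightarrow>
     1 \<le> n \<and> l \<le> n \<and> pushdown_matrix n M \<and>
     (\<forall>p \<pi>. \<forall>i\<in>{1..n}. \<forall>j\<in>{1..n}. M [p] \<pi> i j \<in> S') \<and>
     (\<forall>i\<in>{1..n}. I i \<in> S' \<and> P i \<in> S')"

fun mpow :: "((idx \<Rightarrow> 's::semiring_1) \<Rightarrow> idx set \<Rightarrow> 's) \<Rightarrow> nat \<Rightarrow>
    ('g::countable list \<Rightarrow> 'g list \<Rightarrow> nat \<Rightarrow> nat \<Rightarrow> 's) \<Rightarrow> nat \<Rightarrow> 'g list \<Rightarrow> 'g list \<Rightarrow> nat \<Rightarrow> nat \<Rightarrow> 's" where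
  "mpow \<sigma> n M 0 \<pi>1 \<pi>2 i j = (if \<pi>1 = \<pi>2 \<and> i = j then 1 else 0)"
| "mpow \<sigma> n M (Suc m) \<pi>1 \<pi>2 i j =
     gsum \<sigma> enc_cnt (\<lambda>(\<pi>, k). M \<pi>1 \<pi> i k * mpow \<sigma> n M m \<pi> \<pi>2 k j) (UNIV \<times> {1..n})"

definition mstar :: "((idx \<Rightarrow> 's::semiring_1) \<Rightarrow> idx set \<Rightarrow> 's) \<Rightarrow> nat \<Rightarrow>
    ('g::countable list \<Rightarrow> 'g list \<Rightarrow> nat \<Rightarrow> nat \<Rightarrow> 's) \<Rightarrow> 'g list \<Rightarrow> 'g list \<Rightarrow> nat \<Rightarrow> nat \<Rightarrow> 's" where
  "mstar \<sigma> n M \<pi>1 \<pi>2 i j = gsum \<sigma> enc_cnt (\<lambda>m. mpow \<sigma> n M m \<pi>1 \<pi>2 i j) UNIV"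

text \<open>M^{omega,l}: q t = (pi_(t+1), j_(t+1)) and (pi_0, j_0) = (pi, i); the t-th factor is
  the (j_t, j_(t+1)) entry of the block M_(pi_t, pi_(t+1)).\<close>
definition prev_cfg :: "'g list \<Rightarrow> nat \<Rightarrow> (nat \<Rightarrow> 'g list \<times> nat) \<Rightarrow> nat \<Rightarrow> 'g list \<times> nat" where
  "prev_cfg \<pi> i q t = (if t = 0 then (\<pi>, i) else q (t - 1))"

definition momega :: "((idx \<Rightarrow> 'v::comm_monoid_add) \<Rightarrow> idx set \<Rightarrow> 'v) \<Rightarrow> ((nat \<Rightarrow> 's::semiring_1) \<Rightarrow> 'v)
    \<Rightarrow> nat \<Rightarrow> nat \<Rightarrow> ('g::countable list \<Rightarrow> 'g list \<Rightarrow> nat \<Rightarrow> nat \<Rightarrow> 's) \<Rightarrow> 'g list \<Rightarrow> nat \<Rightarrow> 'v" where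
  "momega \<sigma>V iprod n l M \<pi> i =
     gsum \<sigma>V enc_cseq
       (\<lambda>q. iprod (\<lambda>t. M (fst (prev_cfg \<pi> i q t)) (fst (q t)) (snd (prev_cfg \<pi> i q t)) (snd (q t))))
       {q. (\<forall>t. snd (q t) \<in> {1..n}) \<and> infinite {t. snd (q t) \<le> l}}"

definition pda_behavior ::
  "((idx \<Rightarrow> 's::semiring_1) \<Rightarrow> idx set \<Rightarrow> 's) \<Rightarrow> ((idx \<Rightarrow> 'v::comm_monoid_add) \<Rightarrow> idx set \<Rightarrow> 'v)
     \<Rightarrow> ('s \<Rightarrow> 'v \<Rightarrow> 'v) \<Rightarrow> ((nat \<Rightarrow> 's) \<Rightarrow> 'v) \<Rightarrow> nat \<Rightarrow> ('g::countable list \<Rightarrow> 'g list \<Rightarrow> nat \<Rightarrow> nat \<Rightarrow> 's)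
     \<Rightarrow> (nat \<Rightarrow> 's) \<Rightarrow> (nat \<Rightarrow> 's) \<Rightarrow> 'g \<Rightarrow> nat \<Rightarrow> 's \<times> 'v" where
  "pda_behavior \<sigma>S \<sigma>V act iprod n M I P p0 l =
     ((\<Sum>j\<in>{1..n}. (\<Sum>m\<in>{1..n}. I m * mstar \<sigma>S n M [p0] [] m j) * P j),
      (\<Sum>m\<in>{1..n}. act (I m) (momega \<sigma>V iprod n l M [p0] m)))"

end

theory Submission
  imports Defs "HOL-Library.Omega_Words_Fun"
begin

text \<open>Both sides of each equation are sums over computations of the automaton. A power of
  the matrix M sums, over configuration sequences, the product of the weights of consecutive
  moves, and since M is a pushdown matrix only sequences obeying the stack discipline contribute;
  likewise M^{omega,l} sums over infinite runs through states \<open>\<le> l\<close> infinitely often.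
  Placing a stack word r below all stacks preserves weights. Hence a computation from p r to the
  empty stack first pops p (through stacks y r with y nonempty) and then empties r, and this
  splitting is unique; summing gives [i, p r, j] = \<Sum>m [i, p, m] [m, r, j]. An infinite run from
  p r either never pops p, and is then a run from p lifted by r, or splits the same way. Unfolding
  one move of M and iterating these decompositions along the pushed word yields the system.\<close>

lemma inj_enc_cnt: "inj enc_cnt"
  unfolding enc_cnt_def inj_def by (metis to_nat_split)

lemma inj_enc_cseq: "inj enc_cseq"
proof (rule injI)
  fix f g :: "nat \<Rightarrow> 'a::countable"
  assume "enc_cseq f = enc_cseq g"
  then have "to_nat (f t) = to_nat (g t)" for t unfolding enc_cseq_def by (metis comp_apply)
  then show "f = g" by auto
qed

lemma inj_on_enc_cnt [simp]: "inj_on enc_cnt A"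
  using inj_enc_cnt by (rule inj_on_subset) simp

lemma inj_on_enc_cseq [simp]: "inj_on enc_cseq A"
  using inj_enc_cseq by (rule inj_on_subset) simp

locale complete_sum =
  fixes \<sigma> :: "(idx \<Rightarrow> 'a::comm_monoid_add) \<Rightarrow> idx set \<Rightarrow> 'a"
  assumes complete: "complete_monoid \<sigma>"
begin

lemma sum_cong: "(\<And>x. x \<in> A \<Longrightarrow> f x = g x) \<Longrightarrow> \<sigma> f A = \<sigma> g A"
  using complete[unfolded complete_monoid_def, THEN conjunct1, rule_format, of A f g] by blast

lemma sum_finite: "finite A \<Longrightarrow> \<sigma> f A = sum f A"
  using complete[unfolded complete_monoid_def, THEN conjunct2, THEN conjunct1, rule_format, of A f] .

lemma sum_UN_disjoint:
  "(\<And>j k. j \<in> J \<Longrightarrow> k \<in> J \<Longrightarrow> j \<noteq> k \<Longrightarrow> Q j \<inter> Q k = {}) \<Longrightarrow>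
   \<sigma> (\<lambda>j. \<sigma> f (Q j)) J = \<sigma> f (\<Union>j\<in>J. Q j)"
  using complete[unfolded complete_monoid_def, THEN conjunct2, THEN conjunct2, rule_format, of J Q f] .

lemma sum_zero: "\<sigma> (\<lambda>_. 0) A = 0"
proof -
  have "\<sigma> (\<lambda>_. 0) A = \<sigma> (\<lambda>_. \<sigma> (\<lambda>_. 0) {}) A" by (simp add: sum_finite)
  also have "\<dots> = \<sigma> (\<lambda>_. 0) {}" using sum_UN_disjoint[of A "\<lambda>_. {}" "\<lambda>_. 0"] by simp
  finally show ?thesis by (simp add: sum_finite)
qed

lemma sum_reindex_bij: "bij_betw h B A \<Longrightarrow> \<sigma> f A = \<sigma> (\<lambda>b. f (h b)) B"
proof -
  assume h: "bij_betw h B A"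
  have "\<sigma> (\<lambda>b. f (h b)) B = \<sigma> (\<lambda>b. \<sigma> f {h b}) B" by (rule sum_cong) (simp add: sum_finite)
  also have "\<dots> = \<sigma> f (\<Union>b\<in>B. {h b})"
    by (rule sum_UN_disjoint) (use h in \<open>auto simp: bij_betw_def inj_on_def\<close>)
  also have "(\<Union>b\<in>B. {h b}) = A" using h by (auto simp: bij_betw_def)
  finally show ?thesis by simp
qed

lemma gsum_cong: "(\<And>x. x \<in> A \<Longrightarrow> f x = g x) \<Longrightarrow> gsum \<sigma> e f A = gsum \<sigma> e g A"
  unfolding gsum_def by (rule sum_cong) (metis imageI inv_into_into)

lemma gsum_finite: "finite A \<Longrightarrow> inj_on e A \<Longrightarrow> gsum \<sigma> e f A = sum f A"
  unfolding gsum_def by (simp add: sum_finite sum.reindex)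

lemma gsum_zero: "gsum \<sigma> e (\<lambda>_. 0) A = 0"
  unfolding gsum_def by (simp add: sum_zero)

lemma gsum_reindex_bij:
  assumes "inj_on e A" "inj_on e' B" "bij_betw h B A"
  shows "gsum \<sigma> e f A = gsum \<sigma> e' (\<lambda>b. f (h b)) B"
proof -
  define k where "k u = e (h (inv_into B e' u))" for u
  have "bij_betw (e \<circ> h \<circ> inv_into B e') (e' ` B) (e ` A)"
    by (intro bij_betw_trans[OF bij_betw_inv_into[OF inj_on_imp_bij_betw[OF assms(2)]]]
        bij_betw_trans[OF assms(3) inj_on_imp_bij_betw[OF assms(1)]])
  hence k: "bij_betw k (e' ` B) (e ` A)" unfolding k_def comp_def .
  have "gsum \<sigma> e f A = \<sigma> (\<lambda>u. f (inv_into A e (k u))) (e' ` B)"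
    unfolding gsum_def by (rule sum_reindex_bij[OF k])
  also have "\<dots> = gsum \<sigma> e' (\<lambda>b. f (h b)) B"
    unfolding gsum_def k_def
  proof (rule sum_cong)
    fix u assume "u \<in> e' ` B"
    then obtain b where b: "b \<in> B" "u = e' b" by auto
    then have "h b \<in> A" using assms(3) by (auto simp: bij_betw_def)
    then show "f (inv_into A e (e (h (inv_into B e' u)))) = f (h (inv_into B e' u))"
      using b by (simp add: inv_into_f_f[OF assms(1)] inv_into_f_f[OF assms(2)])
  qed
  finally show ?thesis .
qed

lemma gsum_reindex:
  "inj_on h B \<Longrightarrow> inj_on e (h ` B) \<Longrightarrow> inj_on e' B \<Longrightarrow>
    gsum \<sigma> e f (h ` B) = gsum \<sigma> e' (\<lambda>b. f (h b)) B"
  using gsum_reindex_bij[of e "h ` B" e' B h f] by (simp add: bij_betw_def)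

lemma gsum_UN_disjoint:
  assumes inj: "inj_on e (\<Union>j\<in>J. Q j)" "inj_on e' J"
    and disj: "\<And>j k. j \<in> J \<Longrightarrow> k \<in> J \<Longrightarrow> j \<noteq> k \<Longrightarrow> Q j \<inter> Q k = {}"
  shows "gsum \<sigma> e f (\<Union>j\<in>J. Q j) = gsum \<sigma> e' (\<lambda>j. gsum \<sigma> e f (Q j)) J"
proof -
  let ?U = "\<Union>j\<in>J. Q j"
  define F where "F w = f (inv_into ?U e w)" for w
  define Q' where "Q' u = e ` Q (inv_into J e' u)" for u
  have inner: "gsum \<sigma> e f (Q j) = \<sigma> F (e ` Q j)" if "j \<in> J" for j
    unfolding gsum_def F_def
  proof (rule sum_cong)
    fix w assume "w \<in> e ` Q j"
    then obtain x where x: "x \<in> Q j" "w = e x" by auto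
    have "inj_on e (Q j)" "x \<in> ?U" using that x(1) by (auto intro: inj_on_subset[OF inj(1)])
    then show "f (inv_into (Q j) e w) = f (inv_into ?U e w)"
      using x inj(1) by (simp add: inv_into_f_f)
  qed
  have "gsum \<sigma> e' (\<lambda>j. gsum \<sigma> e f (Q j)) J = \<sigma> (\<lambda>u. \<sigma> F (Q' u)) (e' ` J)"
    unfolding gsum_def[of _ e'] Q'_def
    by (rule sum_cong) (simp add: inner inv_into_into)
  also have "\<dots> = \<sigma> F (\<Union>u\<in>e' ` J. Q' u)"
  proof (rule sum_UN_disjoint)
    fix u v assume "u \<in> e' ` J" "v \<in> e' ` J" "u \<noteq> v"
    then obtain a b where ab: "a \<in> J" "b \<in> J" "a \<noteq> b" "u = e' a" "v = e' b" by auto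
    have "e ` (Q a \<inter> Q b) = e ` Q a \<inter> e ` Q b"
      using ab(1,2) by (intro inj_on_image_Int[OF inj(1)]) auto
    then show "Q' u \<inter> Q' v = {}" unfolding Q'_def using ab disj inj(2) by simp
  qed
  also have "(\<Union>u\<in>e' ` J. Q' u) = e ` ?U" unfolding Q'_def using inj(2) by auto
  finally show ?thesis unfolding gsum_def F_def ..
qed

lemma gsum_Un_disjoint:
  assumes "inj_on e (A \<union> B)" "A \<inter> B = {}"
  shows "gsum \<sigma> e f (A \<union> B) = gsum \<sigma> e f A + gsum \<sigma> e f B"
proof -
  define Q where "Q j = (if j = (0::nat) then A else B)" for j
  have U: "A \<union> B = (\<Union>j\<in>{0,1}. Q j)" unfolding Q_def by auto
  have "gsum \<sigma> e f (A \<union> B) = gsum \<sigma> enc_cnt (\<lambda>j. gsum \<sigma> e f (Q j)) {0,1}"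
    unfolding U by (rule gsum_UN_disjoint) (use assms U in \<open>auto simp: Q_def inj_eq[OF inj_enc_cnt]\<close>)
  also have "\<dots> = gsum \<sigma> e f A + gsum \<sigma> e f B" by (simp add: gsum_finite Q_def inj_eq[OF inj_enc_cnt])
  finally show ?thesis .
qed

lemma gsum_mono_neutral:
  assumes "B \<subseteq> A" "inj_on e A" "\<And>x. x \<in> A - B \<Longrightarrow> f x = 0"
  shows "gsum \<sigma> e f A = gsum \<sigma> e f B"
proof -
  have "gsum \<sigma> e f A = gsum \<sigma> e f B + gsum \<sigma> e f (A - B)"
    using gsum_Un_disjoint[of e B "A - B" f] assms(1,2) by (simp add: Un_absorb1)
  also have "gsum \<sigma> e f (A - B) = 0"
    using gsum_cong[of "A - B" f "\<lambda>_. 0"] assms(3) by (simp add: gsum_zero)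
  finally show ?thesis by simp
qed

lemma gsum_Sigma:
  assumes "inj_on e (Sigma A B)" "inj_on e1 A" "\<And>x. inj_on e2 (B x)"
  shows "gsum \<sigma> e f (Sigma A B) = gsum \<sigma> e1 (\<lambda>x. gsum \<sigma> e2 (\<lambda>y. f (x, y)) (B x)) A"
proof -
  have S: "Sigma A B = (\<Union>x\<in>A. Pair x ` B x)" by auto
  have "gsum \<sigma> e f (Sigma A B) = gsum \<sigma> e1 (\<lambda>x. gsum \<sigma> e f (Pair x ` B x)) A"
    unfolding S by (rule gsum_UN_disjoint) (use assms(1,2) S in auto)
  also have "\<dots> = gsum \<sigma> e1 (\<lambda>x. gsum \<sigma> e2 (\<lambda>y. f (x, y)) (B x)) A"
  proof (rule gsum_cong)
    fix x assume "x \<in> A"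
    have "inj_on e (Pair x ` B x)" by (rule inj_on_subset[OF assms(1)]) (use \<open>x \<in> A\<close> in auto)
    then show "gsum \<sigma> e f (Pair x ` B x) = gsum \<sigma> e2 (\<lambda>y. f (x, y)) (B x)"
      using gsum_reindex[where h = "Pair x" and e' = e2] assms(3) by (simp add: inj_on_def)
  qed
  finally show ?thesis .
qed

lemma gsum_lists_by_length:
  fixes f :: "'g::finite list \<times> nat \<Rightarrow> _"
  assumes "finite A"
  shows "gsum \<sigma> enc_cnt f (UNIV \<times> A) =
    gsum \<sigma> enc_cnt (\<lambda>k. \<Sum>ps\<in>{ps. length ps = k}. \<Sum>m\<in>A. f (ps, m)) UNIV"
proof -
  have U: "UNIV \<times> A = (\<Union>k. {ps :: 'g list. length ps = k} \<times> A)" by auto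
  have fin: "finite {ps :: 'g list. length ps = k}" for k
    using finite_lists_length_eq[of "UNIV :: 'g set" k] by simp
  have "gsum \<sigma> enc_cnt f (UNIV \<times> A) =
      gsum \<sigma> enc_cnt (\<lambda>k. gsum \<sigma> enc_cnt f ({ps :: 'g list. length ps = k} \<times> A)) UNIV"
    unfolding U by (rule gsum_UN_disjoint) auto
  also have "\<dots> = gsum \<sigma> enc_cnt (\<lambda>k. \<Sum>ps\<in>{ps. length ps = k}. \<Sum>m\<in>A. f (ps, m)) UNIV"
    using fin assms by (intro gsum_cong) (simp add: gsum_finite sum.cartesian_product)
  finally show ?thesis .
qed

end

locale complete_pair =
  fixes \<sigma>S :: "(idx \<Rightarrow> 's::semiring_1) \<Rightarrow> idx set \<Rightarrow> 's"
    and \<sigma>V :: "(idx \<Rightarrow> 'v::comm_monoid_add) \<Rightarrow> idx set \<Rightarrow> 'v"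
    and act :: "'s \<Rightarrow> 'v \<Rightarrow> 'v"
    and iprod :: "(nat \<Rightarrow> 's) \<Rightarrow> 'v"
  assumes pair: "complete_ssp \<sigma>S \<sigma>V act iprod"
begin

lemma complete_semiring: "complete_semiring \<sigma>S"
  using pair unfolding complete_ssp_def by blast

lemma complete_semimodule: "complete_semimodule \<sigma>S \<sigma>V act"
  using pair unfolding complete_ssp_def by blast

lemma iprod_unfold: "iprod s = act (s 0) (iprod (\<lambda>t. s (Suc t)))"
  using pair unfolding complete_ssp_def by blast

lemma act_mult: "act (a * b) v = act a (act b v)"
  and act_one [simp]: "act 1 v = v"
  and act_zero_left [simp]: "act 0 v = 0"
  and act_zero_right [simp]: "act a 0 = 0"
  and act_add_right: "act a (v + u) = act a v + act a u"
  using complete_semimodule unfolding complete_semimodule_def by blast+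

lemma act_sum: "act a (sum f A) = (\<Sum>x\<in>A. act a (f x))"
  by (induction A rule: infinite_finite_induct) (auto simp: act_add_right)

lemma act_gsum: "act a (gsum \<sigma>V e f A) = gsum \<sigma>V e (\<lambda>x. act a (f x)) A"
  using complete_semimodule unfolding complete_semimodule_def gsum_def by blast

lemma gsum_act: "act (gsum \<sigma>S e f A) v = gsum \<sigma>V e (\<lambda>x. act (f x) v) A"
  using complete_semimodule[unfolded complete_semimodule_def, THEN conjunct2, THEN conjunct2,
      THEN conjunct2, THEN conjunct2, THEN conjunct2, THEN conjunct2, THEN conjunct2, THEN conjunct2,
      rule_format, of "\<lambda>u. f (inv_into A e u)" "e ` A" v]
  unfolding gsum_def .

lemma gsum_mult_left: "gsum \<sigma>S e (\<lambda>x. c * f x) A = c * gsum \<sigma>S e f A"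
  using complete_semiring[unfolded complete_semiring_def, THEN conjunct2, THEN conjunct1,
      rule_format, of c "\<lambda>u. f (inv_into A e u)" "e ` A"]
  unfolding gsum_def .

lemma gsum_mult_right: "gsum \<sigma>S e (\<lambda>x. f x * c) A = gsum \<sigma>S e f A * c"
  using complete_semiring[unfolded complete_semiring_def, THEN conjunct2, THEN conjunct2,
      rule_format, of "\<lambda>u. f (inv_into A e u)" c "e ` A"]
  unfolding gsum_def .

sublocale S: complete_sum \<sigma>S
  using complete_semiring unfolding complete_semiring_def by unfold_locales blast

sublocale V: complete_sum \<sigma>V
  using complete_semimodule unfolding complete_semimodule_def by unfold_locales blast

lemma iprod_eq_0: "s t = 0 \<Longrightarrow> iprod s = 0"
proof (induction t arbitrary: s)
  case 0
  then show ?case by (subst iprod_unfold) simp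
next
  case (Suc t)
  then have "iprod (\<lambda>u. s (Suc u)) = 0" by simp
  then show ?case by (subst iprod_unfold) simp
qed

end

lemma all_nat_Suc_iff: "(\<forall>t. P t) \<longleftrightarrow> P 0 \<and> (\<forall>t. P (Suc t))"
  by (metis not0_implies_Suc)

lemma all_build_iff: "(\<forall>t. P ((x ## w) t)) \<longleftrightarrow> P x \<and> (\<forall>t. P (w t))"
  by (subst all_nat_Suc_iff) simp

lemma infinite_build_iff: "infinite {t. P ((x ## w) t)} \<longleftrightarrow> infinite {t. P (w t)}"
proof -
  have "{t. P ((x ## w) t)} - {0} = Suc ` {t. P (w t)}"
  proof (rule set_eqI)
    show "t \<in> {t. P ((x ## w) t)} - {0} \<longleftrightarrow> t \<in> Suc ` {t. P (w t)}" for t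
      by (cases t) auto
  qed
  then show ?thesis
    by (metis Diff_empty finite_Diff_insert finite_imageD finite_imageI inj_Suc)
qed

lemma comp_build: "f \<circ> (a ## w) = f a ## (f \<circ> w)"
proof
  show "(f \<circ> (a ## w)) t = (f a ## (f \<circ> w)) t" for t by (cases t) simp_all
qed

lemma prev_cfg_eq_build: "prev_cfg \<pi> i q = (\<pi>, i) ## q"
proof
  show "prev_cfg \<pi> i q t = ((\<pi>, i) ## q) t" for t
    by (cases t) (simp_all add: prev_cfg_def)
qed

lemma append_eq_first_hit_unique:
  assumes "map f xs @ ys = map f xs' @ ys'" "inj f" "xs \<noteq> []" "xs' \<noteq> []"
    "P (last xs)" "P (last xs')" "\<forall>d\<in>set (butlast xs). \<not> P d" "\<forall>d\<in>set (butlast xs'). \<not> P d"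
  shows "xs = xs' \<and> ys = ys'"
  using assms
proof (induction xs arbitrary: xs')
  case (Cons a as)
  obtain b bs where xs': "xs' = b # bs" using Cons.prems(4) by (cases xs') auto
  have ab: "a = b" using Cons.prems(1,2) xs' by (auto dest: injD)
  show ?case
  proof (cases "as = []")
    case True
    then have "bs = []" using Cons.prems(5,8) xs' ab by (cases bs) auto
    then show ?thesis using True xs' ab Cons.prems(1) by simp
  next
    case False
    then have "bs \<noteq> []" using Cons.prems(6,7) xs' ab by auto
    then have "as = bs \<and> ys = ys'" using Cons.IH[of bs] Cons.prems False xs' ab by simp
    then show ?thesis using xs' ab by simp
  qed
qed simp

lemma last_Cons_append: "last (c # xs @ ys) = last (last (c # xs) # ys)"
  by (induction xs arbitrary: c) auto

definition state_lists :: "nat \<Rightarrow> nat \<Rightarrow> nat list set" where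
  "state_lists n k = {ms. length ms = k \<and> set ms \<subseteq> {1..n}}"

lemma state_lists_0 [simp]: "state_lists n 0 = {[]}"
  unfolding state_lists_def by auto

lemma sum_state_lists_Suc:
  "(\<Sum>ms\<in>state_lists n (Suc k). f ms) = (\<Sum>m\<in>{1..n}. \<Sum>ms\<in>state_lists n k. f (m # ms))"
proof -
  have eq: "state_lists n (Suc k) = (\<lambda>(m, ms). m # ms) ` ({1..n} \<times> state_lists n k)"
    unfolding state_lists_def by (auto simp: image_iff length_Suc_conv)
  have "(\<Sum>ms\<in>state_lists n (Suc k). f ms) = (\<Sum>x\<in>{1..n} \<times> state_lists n k. f (fst x # snd x))"
    unfolding eq by (subst sum.reindex) (auto simp: inj_on_def case_prod_beta)
  then show ?thesis by (simp add: sum.cartesian_product split_beta')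
qed

section \<open>Finite computations\<close>

locale pushdown_system = complete_pair \<sigma>S \<sigma>V act iprod
  for \<sigma>S :: "(idx \<Rightarrow> 's::semiring_1) \<Rightarrow> idx set \<Rightarrow> 's"
    and \<sigma>V :: "(idx \<Rightarrow> 'v::comm_monoid_add) \<Rightarrow> idx set \<Rightarrow> 'v"
    and act iprod +
  fixes n :: nat
    and M :: "'g::finite list \<Rightarrow> 'g list \<Rightarrow> nat \<Rightarrow> nat \<Rightarrow> 's"
  assumes pushdown: "pushdown_matrix n M"
begin

abbreviation states :: "nat set" where "states \<equiv> {1..n}"

definition weight :: "'g list \<times> nat \<Rightarrow> 'g list \<times> nat \<Rightarrow> 's" where
  "weight c d = M (fst c) (fst d) (snd c) (snd d)"

fun path_weight :: "'g list \<times> nat \<Rightarrow> ('g list \<times> nat) list \<Rightarrow> 's" where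
  "path_weight c [] = 1"
| "path_weight c (d # ds) = weight c d * path_weight d ds"

definition step :: "'g list \<times> nat \<Rightarrow> 'g list \<times> nat \<Rightarrow> bool" where
  "step c d \<longleftrightarrow> (\<exists>p \<pi> \<pi>'. fst c = p # \<pi>' \<and> fst d = \<pi> @ \<pi>')"

fun is_path :: "'g list \<times> nat \<Rightarrow> ('g list \<times> nat) list \<Rightarrow> bool" where
  "is_path c [] = True"
| "is_path c (d # ds) \<longleftrightarrow> step c d \<and> is_path d ds"

definition seqs_of_length :: "nat \<Rightarrow> 'g list \<times> nat \<Rightarrow> 'g list \<times> nat \<Rightarrow> ('g list \<times> nat) list set" where
  "seqs_of_length m c0 c1 = {cs. length cs = m \<and> (\<forall>d\<in>set cs. snd d \<in> states) \<and> last (c0 # cs) = c1}"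

definition seqs :: "'g list \<times> nat \<Rightarrow> 'g list \<times> nat \<Rightarrow> ('g list \<times> nat) list set" where
  "seqs c0 c1 = {cs. (\<forall>d\<in>set cs. snd d \<in> states) \<and> last (c0 # cs) = c1}"

definition paths :: "'g list \<times> nat \<Rightarrow> 'g list \<times> nat \<Rightarrow> ('g list \<times> nat) list set" where
  "paths c0 c1 = {cs \<in> seqs c0 c1. is_path c0 cs}"

lemma weight_eq_0: "snd c \<in> states \<Longrightarrow> snd d \<in> states \<Longrightarrow> \<not> step c d \<Longrightarrow> weight c d = 0"
  using pushdown unfolding pushdown_matrix_def weight_def step_def by blast

lemma path_weight_eq_0:
  "snd c \<in> states \<Longrightarrow> \<forall>d\<in>set ds. snd d \<in> states \<Longrightarrow> \<not> is_path c ds \<Longrightarrow> path_weight c ds = 0"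
  by (induction ds arbitrary: c) (auto simp: weight_eq_0)

lemma path_weight_append: "path_weight c (xs @ ys) = path_weight c xs * path_weight (last (c # xs)) ys"
  by (induction xs arbitrary: c) (auto simp: mult.assoc)

lemma is_path_append: "is_path c (xs @ ys) \<longleftrightarrow> is_path c xs \<and> is_path (last (c # xs)) ys"
  by (induction xs arbitrary: c) auto

lemma is_path_butlast_nonempty: "is_path c cs \<Longrightarrow> d \<in> set (butlast cs) \<Longrightarrow> fst d \<noteq> []"
proof (induction cs arbitrary: c)
  case (Cons a as)
  show ?case
  proof (cases "d = a")
    case True
    with Cons.prems obtain b bs where "as = b # bs" by (cases as) auto
    then show ?thesis using Cons.prems True by (auto simp: step_def)
  next
    case False
    then show ?thesis using Cons by (auto split: if_splits)
  qed
qed simp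

lemma seqs_of_length_0: "seqs_of_length 0 c0 c1 = (if c0 = c1 then {[]} else {})"
  unfolding seqs_of_length_def by auto

lemma seqs_of_length_Suc:
  "seqs_of_length (Suc m) c0 c1 = (\<lambda>(c, cs). c # cs) ` Sigma (UNIV \<times> states) (\<lambda>c. seqs_of_length m c c1)"
proof (rule set_eqI)
  fix xs
  show "xs \<in> seqs_of_length (Suc m) c0 c1 \<longleftrightarrow>
      xs \<in> (\<lambda>(c, cs). c # cs) ` Sigma (UNIV \<times> states) (\<lambda>c. seqs_of_length m c c1)"
  proof
    assume xs: "xs \<in> seqs_of_length (Suc m) c0 c1"
    then obtain c cs where "xs = c # cs" unfolding seqs_of_length_def by (cases xs) auto
    then show "xs \<in> (\<lambda>(c, cs). c # cs) ` Sigma (UNIV \<times> states) (\<lambda>c. seqs_of_length m c c1)"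
      using xs unfolding seqs_of_length_def by (intro image_eqI[of _ _ "(c, cs)"]) (auto simp: mem_Times_iff)
  qed (auto simp: seqs_of_length_def mem_Times_iff)
qed

lemma seqs_Cons:
  assumes "c0 \<noteq> c1"
  shows "seqs c0 c1 = (\<lambda>(c, cs). c # cs) ` Sigma (UNIV \<times> states) (\<lambda>c. seqs c c1)"
proof (rule set_eqI)
  fix xs
  show "xs \<in> seqs c0 c1 \<longleftrightarrow> xs \<in> (\<lambda>(c, cs). c # cs) ` Sigma (UNIV \<times> states) (\<lambda>c. seqs c c1)"
  proof
    assume xs: "xs \<in> seqs c0 c1"
    then obtain c cs where "xs = c # cs" using assms unfolding seqs_def by (cases xs) auto
    then show "xs \<in> (\<lambda>(c, cs). c # cs) ` Sigma (UNIV \<times> states) (\<lambda>c. seqs c c1)"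
      using xs unfolding seqs_def by (intro image_eqI[of _ _ "(c, cs)"]) (auto simp: mem_Times_iff)
  qed (auto simp: seqs_def mem_Times_iff)
qed

lemma gsum_weight_Cons:
  "gsum \<sigma>S enc_cnt (path_weight c0) ((\<lambda>(c, cs). c # cs) ` Sigma (UNIV \<times> states) A) =
   gsum \<sigma>S enc_cnt (\<lambda>c. weight c0 c * gsum \<sigma>S enc_cnt (path_weight c) (A c)) (UNIV \<times> states)"
proof -
  have "gsum \<sigma>S enc_cnt (path_weight c0) ((\<lambda>(c, cs). c # cs) ` Sigma (UNIV \<times> states) A) =
      gsum \<sigma>S enc_cnt (\<lambda>(c, cs). weight c0 c * path_weight c cs) (Sigma (UNIV \<times> states) A)"
    by (subst S.gsum_reindex[where e' = enc_cnt]) (auto intro!: inj_onI simp: split_beta')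
  also have "\<dots> = gsum \<sigma>S enc_cnt (\<lambda>c. weight c0 c * gsum \<sigma>S enc_cnt (path_weight c) (A c)) (UNIV \<times> states)"
    using S.gsum_Sigma[of enc_cnt "UNIV \<times> states" A enc_cnt enc_cnt "\<lambda>(c, cs). weight c0 c * path_weight c cs"]
    by (simp add: gsum_mult_left)
  finally show ?thesis .
qed

lemma mpow_eq_gsum_seqs:
  "mpow \<sigma>S n M m \<pi>1 \<pi>2 i j = gsum \<sigma>S enc_cnt (path_weight (\<pi>1, i)) (seqs_of_length m (\<pi>1, i) (\<pi>2, j))"
proof (induction m arbitrary: \<pi>1 i)
  case 0
  show ?case by (simp add: seqs_of_length_0 S.gsum_finite)
next
  case (Suc m)
  have "mpow \<sigma>S n M (Suc m) \<pi>1 \<pi>2 i j = gsum \<sigma>S enc_cnt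
      (\<lambda>c. weight (\<pi>1, i) c * gsum \<sigma>S enc_cnt (path_weight c) (seqs_of_length m c (\<pi>2, j))) (UNIV \<times> states)"
    by (simp only: mpow.simps, intro S.gsum_cong) (auto simp: Suc weight_def)
  then show ?case unfolding seqs_of_length_Suc gsum_weight_Cons .
qed

lemma mstar_eq_gsum_seqs:
  "mstar \<sigma>S n M \<pi>1 \<pi>2 i j = gsum \<sigma>S enc_cnt (path_weight (\<pi>1, i)) (seqs (\<pi>1, i) (\<pi>2, j))"
proof -
  have "mstar \<sigma>S n M \<pi>1 \<pi>2 i j =
      gsum \<sigma>S enc_cnt (\<lambda>m. gsum \<sigma>S enc_cnt (path_weight (\<pi>1, i)) (seqs_of_length m (\<pi>1, i) (\<pi>2, j))) UNIV"
    unfolding mstar_def by (simp add: mpow_eq_gsum_seqs)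
  also have "\<dots> = gsum \<sigma>S enc_cnt (path_weight (\<pi>1, i)) (\<Union>m. seqs_of_length m (\<pi>1, i) (\<pi>2, j))"
    by (rule S.gsum_UN_disjoint[symmetric]) (auto simp: seqs_of_length_def)
  also have "(\<Union>m. seqs_of_length m (\<pi>1, i) (\<pi>2, j)) = seqs (\<pi>1, i) (\<pi>2, j)"
    unfolding seqs_def seqs_of_length_def by auto
  finally show ?thesis .
qed

lemma mstar_eq_gsum_paths:
  assumes "i \<in> states"
  shows "mstar \<sigma>S n M \<pi>1 \<pi>2 i j = gsum \<sigma>S enc_cnt (path_weight (\<pi>1, i)) (paths (\<pi>1, i) (\<pi>2, j))"
  unfolding mstar_eq_gsum_seqs
  by (rule S.gsum_mono_neutral) (use assms in \<open>auto simp: paths_def seqs_def intro!: path_weight_eq_0\<close>)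

lemma mstar_unfold:
  assumes "(\<pi>1, i) \<noteq> (\<pi>2, j)"
  shows "mstar \<sigma>S n M \<pi>1 \<pi>2 i j =
    gsum \<sigma>S enc_cnt (\<lambda>c. M \<pi>1 (fst c) i (snd c) * mstar \<sigma>S n M (fst c) \<pi>2 (snd c) j) (UNIV \<times> states)"
  unfolding mstar_eq_gsum_seqs seqs_Cons[OF assms] gsum_weight_Cons
  by (simp add: weight_def mstar_eq_gsum_seqs)

lemma mstar_Nil:
  assumes "m \<in> states"
  shows "mstar \<sigma>S n M [] [] m j = (if m = j then 1 else 0)"
proof -
  have "cs = []" if "is_path ([], m) cs" for cs
    using that by (cases cs) (auto simp: step_def)
  then have "paths ([], m) ([], j) = (if m = j then {[]} else {})"
    unfolding paths_def seqs_def by auto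
  then show ?thesis using mstar_eq_gsum_paths[OF assms] by (simp add: S.gsum_finite)
qed

subsection \<open>Stack lifting and popping\<close>

definition lift :: "'g list \<Rightarrow> 'g list \<times> nat \<Rightarrow> 'g list \<times> nat" where
  "lift r c = (fst c @ r, snd c)"

lemma inj_lift: "inj (lift r)"
  by (rule injI) (auto simp: lift_def prod_eq_iff)

lemma step_lift: "step c d \<Longrightarrow> step (lift r c) (lift r d)"
  unfolding step_def lift_def by auto

lemma step_lift_iff: "fst c \<noteq> [] \<Longrightarrow> step (lift r c) (lift r d) \<longleftrightarrow> step c d"
  unfolding step_def lift_def by (cases "fst c") auto

lemma weight_lift:
  assumes "fst c \<noteq> []" "snd c \<in> states" "snd d \<in> states"
  shows "weight (lift r c) (lift r d) = weight c d"
proof (cases "step c d")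
  case True
  then obtain p \<pi> \<pi>' where "fst c = p # \<pi>'" "fst d = \<pi> @ \<pi>'" unfolding step_def by blast
  then show ?thesis
    using pushdown assms unfolding pushdown_matrix_def weight_def lift_def by simp
next
  case False
  then show ?thesis
    using assms step_lift_iff weight_eq_0[of "lift r c" "lift r d"] weight_eq_0[of c d]
    by (simp add: lift_def)
qed

lemma is_path_lift: "is_path c cs \<Longrightarrow> is_path (lift r c) (map (lift r) cs)"
  by (induction cs arbitrary: c) (auto intro: step_lift)

lemma path_weight_lift:
  "is_path c cs \<Longrightarrow> snd c \<in> states \<Longrightarrow> \<forall>d\<in>set cs. snd d \<in> states \<Longrightarrow>
    path_weight (lift r c) (map (lift r) cs) = path_weight c cs"
proof (induction cs arbitrary: c)
  case (Cons d ds)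
  then have "fst c \<noteq> []" by (auto simp: step_def)
  then show ?case using Cons by (simp add: weight_lift)
qed simp

lemma path_split:
  assumes "is_path c cs" "fst c = x @ r" "x \<noteq> []"
  shows "(\<forall>d\<in>set cs. \<exists>y. y \<noteq> [] \<and> fst d = y @ r) \<or>
    (\<exists>cs1 cs2. cs = map (lift r) cs1 @ cs2 \<and> cs1 \<noteq> [] \<and> fst (last cs1) = [] \<and> is_path (x, snd c) cs1)"
  using assms
proof (induction cs arbitrary: c x)
  case (Cons d ds)
  from Cons.prems obtain p \<pi> \<pi>' where st: "fst c = p # \<pi>'" "fst d = \<pi> @ \<pi>'" "is_path d ds"
    by (auto simp: step_def)
  obtain x0 where x: "x = p # x0" "\<pi>' = x0 @ r" using st(1) Cons.prems(2,3) by (cases x) auto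
  show ?case
  proof (cases "\<pi> @ x0 = []")
    case True
    have "d # ds = map (lift r) [([], snd d)] @ ds" using st x True by (auto simp: lift_def prod_eq_iff)
    moreover have "is_path (x, snd c) [([], snd d)]" using x True by (auto simp: step_def)
    ultimately show ?thesis by (intro disjI2 exI[of _ "[([], snd d)]"] exI[of _ ds]) simp
  next
    case False
    have fd: "fst d = (\<pi> @ x0) @ r" using st x by simp
    from Cons.IH[OF st(3) fd False] show ?thesis
    proof
      assume "\<forall>d\<in>set ds. \<exists>y. y \<noteq> [] \<and> fst d = y @ r"
      then show ?thesis using fd False by auto
    next
      assume "\<exists>cs1 cs2. ds = map (lift r) cs1 @ cs2 \<and> cs1 \<noteq> [] \<and> fst (last cs1) = [] \<and>
        is_path (\<pi> @ x0, snd d) cs1"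
      then obtain cs1 cs2 where h: "ds = map (lift r) cs1 @ cs2" "cs1 \<noteq> []" "fst (last cs1) = []"
        "is_path (\<pi> @ x0, snd d) cs1" by blast
      have "d # ds = map (lift r) ((\<pi> @ x0, snd d) # cs1) @ cs2"
        using h fd by (auto simp: lift_def prod_eq_iff)
      moreover have "is_path (x, snd c) ((\<pi> @ x0, snd d) # cs1)" using h x by (auto simp: step_def)
      ultimately show ?thesis using h by (intro disjI2 exI[of _ "(\<pi> @ x0, snd d) # cs1"] exI[of _ cs2]) simp
    qed
  qed
qed simp

abbreviation pop_paths :: "'g \<Rightarrow> nat \<Rightarrow> (nat \<times> ('g list \<times> nat) list) set" where
  "pop_paths p m \<equiv> Sigma states (\<lambda>m'. paths ([p], m) ([], m'))"

lemma pop_paths_D: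
  assumes "(m2, cs) \<in> pop_paths p m1"
  shows "cs \<noteq> []" "last cs = ([], m2)" "is_path ([p], m1) cs" "\<forall>d\<in>set cs. snd d \<in> states" "m2 \<in> states"
  using assms unfolding paths_def seqs_def by (auto split: if_splits)

lemma lift_pop_path:
  assumes "(m2, cs) \<in> pop_paths p m1"
  shows "is_path (p # r, m1) (map (lift r) cs)" "last ((p # r, m1) # map (lift r) cs) = (r, m2)"
  using is_path_lift[of "([p], m1)" cs r] pop_paths_D[OF assms] by (simp_all add: lift_def last_map)

lemma path_weight_lift_pop_path:
  assumes "(m2, cs) \<in> pop_paths p m1" "m1 \<in> states"
  shows "path_weight (p # r, m1) (map (lift r) cs) = path_weight ([p], m1) cs"
  using path_weight_lift[of "([p], m1)" cs r] pop_paths_D[OF assms(1)] assms(2) by (simp add: lift_def)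

lemma pop_paths_prefix_unique:
  assumes "x \<in> pop_paths p m1" "y \<in> pop_paths p m1" "map (lift r) (snd x) @ a = map (lift r) (snd y) @ b"
  shows "x = y \<and> a = b"
proof -
  obtain m2 cs where x: "x = (m2, cs)" by (cases x)
  obtain m2' cs' where y: "y = (m2', cs')" by (cases y)
  note d = pop_paths_D[OF assms(1)[unfolded x]] and d' = pop_paths_D[OF assms(2)[unfolded y]]
  have "cs = cs' \<and> a = b"
    using assms(3) d d' inj_lift unfolding x y
    by (intro append_eq_first_hit_unique[where P = "\<lambda>d. fst d = []"])
      (auto dest: is_path_butlast_nonempty)
  then show ?thesis using d(2) d'(2) x y by auto
qed

lemma paths_Cons:
  "paths (p # r, m1) ([], j) =
    (\<Union>x\<in>pop_paths p m1. (\<lambda>cs. map (lift r) (snd x) @ cs) ` paths (r, fst x) ([], j))"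
  (is "?L = ?R")
proof
  show "?R \<subseteq> ?L"
  proof
    fix cs assume "cs \<in> ?R"
    then obtain m2 cs1 cs2 where h: "(m2, cs1) \<in> pop_paths p m1" "cs2 \<in> paths (r, m2) ([], j)"
      "cs = map (lift r) cs1 @ cs2" by auto
    note l = lift_pop_path[OF h(1), of r]
    show "cs \<in> ?L"
      using h(2) l pop_paths_D[OF h(1)] unfolding h(3) paths_def seqs_def
      by (auto simp: is_path_append last_Cons_append lift_def last_append split: if_splits)
  qed
next
  show "?L \<subseteq> ?R"
  proof
    fix cs assume cs: "cs \<in> ?L"
    then have path: "is_path (p # r, m1) cs" and last: "last ((p # r, m1) # cs) = ([], j)"
      and st: "\<forall>d\<in>set cs. snd d \<in> states" unfolding paths_def seqs_def by auto
    then have "\<not> (\<forall>d\<in>set cs. \<exists>y. y \<noteq> [] \<and> fst d = y @ r)"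
      by (cases cs rule: rev_cases) auto
    then obtain cs1 cs2 where h: "cs = map (lift r) cs1 @ cs2" "cs1 \<noteq> []" "fst (last cs1) = []"
        "is_path ([p], m1) cs1"
      using path_split[OF path, of "[p]" r] by auto
    define m2 where "m2 = snd (last cs1)"
    have "\<forall>d\<in>set cs1. snd d \<in> states" using st h(1) by (force simp: lift_def)
    then have x: "(m2, cs1) \<in> pop_paths p m1"
      using h(2-4) unfolding m2_def paths_def seqs_def by (auto simp: prod_eq_iff)
    have l1: "last ((p # r, m1) # map (lift r) cs1) = (r, m2)"
      using h(2,3) by (simp add: last_map lift_def m2_def)
    have "last ((r, m2) # cs2) = ([], j)" using last l1 unfolding h(1) by (metis last_Cons_append)
    moreover have "is_path (r, m2) cs2" using path l1 unfolding h(1) by (metis is_path_append)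
    ultimately have "cs2 \<in> paths (r, m2) ([], j)" using st h(1) unfolding paths_def seqs_def by simp
    then show "cs \<in> ?R" using x h(1) by force
  qed
qed

lemma pop_paths_disjoint:
  assumes "x \<in> pop_paths p m1" "y \<in> pop_paths p m1" "x \<noteq> y"
  shows "(\<lambda>cs. map (lift r) (snd x) @ cs) ` A \<inter> (\<lambda>cs. map (lift r) (snd y) @ cs) ` B = {}"
  using pop_paths_prefix_unique[OF assms(1,2)] assms(3) by blast

lemma gsum_paths_through_pop:
  assumes "(m2, cs1) \<in> pop_paths p m1" "m1 \<in> states"
  shows "gsum \<sigma>S enc_cnt (path_weight (p # r, m1)) ((\<lambda>cs. map (lift r) cs1 @ cs) ` paths (r, m2) ([], j)) =
    path_weight ([p], m1) cs1 * mstar \<sigma>S n M r [] m2 j"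
proof -
  have "gsum \<sigma>S enc_cnt (path_weight (p # r, m1)) ((\<lambda>cs. map (lift r) cs1 @ cs) ` paths (r, m2) ([], j)) =
      gsum \<sigma>S enc_cnt (\<lambda>cs. path_weight (p # r, m1) (map (lift r) cs1 @ cs)) (paths (r, m2) ([], j))"
    by (rule S.gsum_reindex) (auto intro: inj_onI)
  also have "\<dots> = gsum \<sigma>S enc_cnt (\<lambda>cs. path_weight ([p], m1) cs1 * path_weight (r, m2) cs) (paths (r, m2) ([], j))"
    using lift_pop_path[OF assms(1)] path_weight_lift_pop_path[OF assms]
    by (simp add: path_weight_append)
  also have "\<dots> = path_weight ([p], m1) cs1 * mstar \<sigma>S n M r [] m2 j"
    using pop_paths_D[OF assms(1)] by (simp add: gsum_mult_left mstar_eq_gsum_paths)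
  finally show ?thesis .
qed

lemma mstar_Cons:
  assumes "m1 \<in> states"
  shows "mstar \<sigma>S n M (p # r) [] m1 j = (\<Sum>m2\<in>states. mstar \<sigma>S n M [p] [] m1 m2 * mstar \<sigma>S n M r [] m2 j)"
proof -
  let ?Q = "\<lambda>x. (\<lambda>cs. map (lift r) (snd x) @ cs) ` paths (r, fst x) ([], j)"
  have "mstar \<sigma>S n M (p # r) [] m1 j = gsum \<sigma>S enc_cnt (path_weight (p # r, m1)) (\<Union>x\<in>pop_paths p m1. ?Q x)"
    using mstar_eq_gsum_paths[OF assms] paths_Cons by metis
  also have "\<dots> = gsum \<sigma>S enc_cnt (\<lambda>x. gsum \<sigma>S enc_cnt (path_weight (p # r, m1)) (?Q x)) (pop_paths p m1)"
    by (rule S.gsum_UN_disjoint) (simp_all add: pop_paths_disjoint)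
  also have "\<dots> = gsum \<sigma>S enc_cnt (\<lambda>x. path_weight ([p], m1) (snd x) * mstar \<sigma>S n M r [] (fst x) j) (pop_paths p m1)"
    using gsum_paths_through_pop[OF _ assms] by (intro S.gsum_cong) auto
  also have "\<dots> = gsum \<sigma>S enc_cnt (\<lambda>m2. mstar \<sigma>S n M [p] [] m1 m2 * mstar \<sigma>S n M r [] m2 j) states"
    using S.gsum_Sigma[of enc_cnt states "\<lambda>m2. paths ([p], m1) ([], m2)" enc_cnt enc_cnt
        "\<lambda>x. path_weight ([p], m1) (snd x) * mstar \<sigma>S n M r [] (fst x) j"]
    by (simp add: gsum_mult_right mstar_eq_gsum_paths[OF assms])
  finally show ?thesis by (simp add: S.gsum_finite)
qed

section \<open>Infinite computations\<close>

definition accepting :: "nat \<Rightarrow> (nat \<Rightarrow> 'g list \<times> nat) set" where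
  "accepting l = {q. (\<forall>t. snd (q t) \<in> states) \<and> infinite {t. snd (q t) \<le> l}}"

definition run_weight :: "'g list \<times> nat \<Rightarrow> (nat \<Rightarrow> 'g list \<times> nat) \<Rightarrow> nat \<Rightarrow> 's" where
  "run_weight c q = (\<lambda>t. weight ((c ## q) t) (q t))"

definition is_run :: "'g list \<times> nat \<Rightarrow> (nat \<Rightarrow> 'g list \<times> nat) \<Rightarrow> bool" where
  "is_run c q \<longleftrightarrow> (\<forall>t. step ((c ## q) t) (q t))"

definition runs :: "nat \<Rightarrow> 'g list \<times> nat \<Rightarrow> (nat \<Rightarrow> 'g list \<times> nat) set" where
  "runs l c = {q \<in> accepting l. is_run c q}"

lemma momega_eq_gsum_accepting:
  "momega \<sigma>V iprod n l M \<pi> i = gsum \<sigma>V enc_cseq (\<lambda>q. iprod (run_weight (\<pi>, i) q)) (accepting l)"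
  unfolding momega_def run_weight_def weight_def accepting_def prev_cfg_eq_build by simp

lemma iprod_run_weight_build: "iprod (run_weight c (x ## q)) = act (weight c x) (iprod (run_weight x q))"
  by (subst iprod_unfold) (simp add: run_weight_def)

lemma iprod_run_weight_conc:
  "iprod (run_weight c (xs \<frown> q)) = act (path_weight c xs) (iprod (run_weight (last (c # xs)) q))"
  by (induction xs arbitrary: c) (simp_all add: iprod_run_weight_build act_mult)

lemma is_run_build: "is_run c (x ## q) \<longleftrightarrow> step c x \<and> is_run x q"
  unfolding is_run_def by (subst all_nat_Suc_iff) simp

lemma is_run_conc: "is_run c (xs \<frown> q) \<longleftrightarrow> is_path c xs \<and> is_run (last (c # xs)) q"
  by (induction xs arbitrary: c) (simp_all add: is_run_build)

lemma is_run_prefix: "is_run c q \<Longrightarrow> is_path c (prefix k q)"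
  using is_run_conc[of c "prefix k q" "suffix k q"] by simp

lemma run_stack_nonempty: "is_run c q \<Longrightarrow> fst (q t) \<noteq> []"
  unfolding is_run_def step_def by (metis build.simps(2) list.distinct(1))

lemma accepting_build: "x ## q \<in> accepting l \<longleftrightarrow> snd x \<in> states \<and> q \<in> accepting l"
  unfolding accepting_def mem_Collect_eq all_build_iff[of "\<lambda>d. snd d \<in> states"]
    infinite_build_iff[of "\<lambda>d. snd d \<le> l"] by blast

lemma accepting_conc: "xs \<frown> q \<in> accepting l \<longleftrightarrow> (\<forall>d\<in>set xs. snd d \<in> states) \<and> q \<in> accepting l"
  by (induction xs) (simp_all add: accepting_build)

lemma momega_eq_gsum_runs:
  assumes "i \<in> states"
  shows "momega \<sigma>V iprod n l M \<pi> i = gsum \<sigma>V enc_cseq (\<lambda>q. iprod (run_weight (\<pi>, i) q)) (runs l (\<pi>, i))"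
  unfolding momega_eq_gsum_accepting
proof (rule V.gsum_mono_neutral)
  fix q assume q: "q \<in> accepting l - runs l (\<pi>, i)"
  then obtain t where t: "\<not> step (((\<pi>, i) ## q) t) (q t)" unfolding runs_def is_run_def by auto
  have "((\<pi>, i) ## q) \<in> accepting l" using q assms by (simp add: accepting_build)
  then have "snd (((\<pi>, i) ## q) t) \<in> states" "snd (q t) \<in> states"
    using q unfolding accepting_def by auto
  then have "run_weight (\<pi>, i) q t = 0" unfolding run_weight_def using t by (intro weight_eq_0)
  then show "iprod (run_weight (\<pi>, i) q) = 0" by (rule iprod_eq_0)
qed (auto simp: runs_def)

lemma momega_Nil:
  assumes "m \<in> states"
  shows "momega \<sigma>V iprod n l M [] m = 0"
proof -
  have "\<not> step ([], m) d" for d by (simp add: step_def)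
  then have "\<not> is_run ([], m) q" for q unfolding is_run_def by (metis build.simps(1))
  then have "runs l ([], m) = {}" unfolding runs_def by blast
  then show ?thesis using momega_eq_gsum_runs[OF assms] by (simp add: V.gsum_finite)
qed

lemma momega_unfold:
  "momega \<sigma>V iprod n l M \<pi> i =
     gsum \<sigma>V enc_cnt (\<lambda>c. act (M \<pi> (fst c) i (snd c)) (momega \<sigma>V iprod n l M (fst c) (snd c))) (UNIV \<times> states)"
proof -
  let ?F = "\<lambda>q. iprod (run_weight (\<pi>, i) q)"
  have U: "accepting l = (\<Union>c\<in>UNIV \<times> states. (\<lambda>q. c ## q) ` accepting l)"
  proof (intro equalityI subsetI)
    fix q assume "q \<in> accepting l"
    moreover have q: "q = q 0 ## suffix 1 q" by (rule build_split)
    ultimately have "snd (q 0) \<in> states" "suffix 1 q \<in> accepting l" by (metis accepting_build)+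
    then show "q \<in> (\<Union>c\<in>UNIV \<times> states. (\<lambda>q. c ## q) ` accepting l)"
      by (intro UN_I[of "q 0"] image_eqI[where f = "\<lambda>w. q 0 ## w" and x = "suffix 1 q", OF q]) (auto simp: mem_Times_iff)
  qed (auto simp: accepting_build)
  have "gsum \<sigma>V enc_cseq ?F (\<Union>c\<in>UNIV \<times> states. (\<lambda>q. c ## q) ` accepting l) =
      gsum \<sigma>V enc_cnt (\<lambda>c. gsum \<sigma>V enc_cseq ?F ((\<lambda>q. c ## q) ` accepting l)) (UNIV \<times> states)"
    by (rule V.gsum_UN_disjoint) auto
  then have "momega \<sigma>V iprod n l M \<pi> i =
      gsum \<sigma>V enc_cnt (\<lambda>c. gsum \<sigma>V enc_cseq ?F ((\<lambda>q. c ## q) ` accepting l)) (UNIV \<times> states)"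
    unfolding momega_eq_gsum_accepting using U by simp
  also have "\<dots> = gsum \<sigma>V enc_cnt
      (\<lambda>c. act (M \<pi> (fst c) i (snd c)) (momega \<sigma>V iprod n l M (fst c) (snd c))) (UNIV \<times> states)"
  proof (rule V.gsum_cong)
    fix c :: "'g list \<times> nat"
    have "gsum \<sigma>V enc_cseq (\<lambda>q. iprod (run_weight (\<pi>, i) q)) ((\<lambda>q. c ## q) ` accepting l) =
        gsum \<sigma>V enc_cseq (\<lambda>q. act (weight (\<pi>, i) c) (iprod (run_weight c q))) (accepting l)"
      by (subst V.gsum_reindex[where e' = enc_cseq]) (auto intro: inj_onI simp: iprod_run_weight_build)
    then show "gsum \<sigma>V enc_cseq (\<lambda>q. iprod (run_weight (\<pi>, i) q)) ((\<lambda>q. c ## q) ` accepting l) =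
        act (M \<pi> (fst c) i (snd c)) (momega \<sigma>V iprod n l M (fst c) (snd c))"
      by (simp add: act_gsum momega_eq_gsum_accepting weight_def)
  qed
  finally show ?thesis .
qed

lemma run_split:
  assumes "is_run c q" "fst c = x @ r" "x \<noteq> []"
  shows "(\<forall>t. \<exists>y. y \<noteq> [] \<and> fst (q t) = y @ r) \<or>
    (\<exists>cs1 q'. q = map (lift r) cs1 \<frown> q' \<and> cs1 \<noteq> [] \<and> fst (last cs1) = [] \<and> is_path (x, snd c) cs1)"
proof (cases "\<exists>k cs1 cs2. prefix k q = map (lift r) cs1 @ cs2 \<and> cs1 \<noteq> [] \<and> fst (last cs1) = [] \<and>
    is_path (x, snd c) cs1")
  case True
  then obtain k cs1 cs2 where h: "prefix k q = map (lift r) cs1 @ cs2" "cs1 \<noteq> []" "fst (last cs1) = []"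
    "is_path (x, snd c) cs1" by blast
  have "q = prefix k q \<frown> suffix k q" by (rule prefix_suffix)
  also have "\<dots> = map (lift r) cs1 \<frown> (cs2 \<frown> suffix k q)" unfolding h(1) by (rule conc_conc[symmetric])
  finally have "q = map (lift r) cs1 \<frown> (cs2 \<frown> suffix k q)" .
  then show ?thesis using h by blast
next
  case False
  have "\<exists>y. y \<noteq> [] \<and> fst (q t) = y @ r" for t
  proof -
    have "\<forall>d\<in>set (prefix (Suc t) q). \<exists>y. y \<noteq> [] \<and> fst d = y @ r"
      using path_split[OF is_run_prefix[OF assms(1)] assms(2,3)] False by blast
    moreover have "q t \<in> set (prefix (Suc t) q)" by simp
    ultimately show ?thesis by blast
  qed
  then show ?thesis by blast
qed

lemma lift_build: "lift r c ## (lift r \<circ> q) = lift r \<circ> (c ## q)"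
  by (rule comp_build[symmetric])

lemma is_run_lift: "is_run c q \<Longrightarrow> is_run (lift r c) (lift r \<circ> q)"
  unfolding is_run_def lift_build by (simp add: step_lift)

lemma is_run_unlift:
  assumes "fst c \<noteq> []" "\<forall>t. fst (q t) \<noteq> []" "is_run (lift r c) (lift r \<circ> q)"
  shows "is_run c q"
  unfolding is_run_def
proof
  fix t
  have "fst ((c ## q) t) \<noteq> []" using assms(1,2) by (cases t) simp_all
  moreover have "step (lift r ((c ## q) t)) (lift r (q t))"
    using assms(3) unfolding is_run_def lift_build by simp
  ultimately show "step ((c ## q) t) (q t)" using step_lift_iff by blast
qed

lemma accepting_lift: "lift r \<circ> q \<in> accepting l \<longleftrightarrow> q \<in> accepting l"
  by (simp add: accepting_def lift_def)

lemma run_weight_lift: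
  assumes "q \<in> runs l c" "snd c \<in> states"
  shows "run_weight (lift r c) (lift r \<circ> q) = run_weight c q"
proof
  fix t
  have q: "q \<in> accepting l" using assms(1) by (simp add: runs_def)
  then have "c ## q \<in> accepting l" using assms(2) by (simp add: accepting_build)
  then have "snd ((c ## q) t) \<in> states" "snd (q t) \<in> states" using q unfolding accepting_def by auto
  moreover have "step ((c ## q) t) (q t)" using assms(1) unfolding runs_def is_run_def by blast
  then have "fst ((c ## q) t) \<noteq> []" unfolding step_def by auto
  ultimately show "run_weight (lift r c) (lift r \<circ> q) t = run_weight c q t"
    unfolding run_weight_def lift_build by (simp add: weight_lift)
qed

lemma runs_above_bottom:
  assumes "q \<in> runs l (p # r, m1)" "\<forall>t. \<exists>y. y \<noteq> [] \<and> fst (q t) = y @ r"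
  shows "q \<in> (\<lambda>q. lift r \<circ> q) ` runs l ([p], m1)"
proof -
  from choice[OF assms(2)] obtain Y where Y: "\<And>t. Y t \<noteq> [] \<and> fst (q t) = Y t @ r" by blast
  define q' where "q' t = (Y t, snd (q t))" for t
  have q: "q = lift r \<circ> q'"
  proof
    show "q t = (lift r \<circ> q') t" for t using Y[of t] by (simp add: q'_def lift_def prod_eq_iff)
  qed
  have run: "is_run (lift r ([p], m1)) (lift r \<circ> q')" "lift r \<circ> q' \<in> accepting l"
    using assms(1) unfolding runs_def q by (simp_all add: lift_def)
  have "fst (q' t) \<noteq> []" for t using Y[of t] by (simp add: q'_def)
  then have "is_run ([p], m1) q'" using is_run_unlift[OF _ _ run(1)] by simp
  then have "q' \<in> runs l ([p], m1)" using run(2) by (simp add: runs_def accepting_lift)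
  then show ?thesis unfolding q by blast
qed

lemma runs_through_pop:
  assumes "q \<in> runs l (p # r, m1)" "q = map (lift r) cs1 \<frown> q'" "cs1 \<noteq> []" "fst (last cs1) = []"
    "is_path ([p], m1) cs1"
  shows "(snd (last cs1), cs1) \<in> pop_paths p m1" "q' \<in> runs l (r, snd (last cs1))"
proof -
  have acc: "\<forall>d\<in>set cs1. snd d \<in> states" "q' \<in> accepting l"
    using assms(1,2) by (auto simp: runs_def accepting_conc lift_def)
  then show "(snd (last cs1), cs1) \<in> pop_paths p m1"
    using assms(3-5) by (auto simp: paths_def seqs_def prod_eq_iff)
  have "last ((p # r, m1) # map (lift r) cs1) = (r, snd (last cs1))"
    using assms(3,4) by (simp add: last_map lift_def prod_eq_iff)
  then show "q' \<in> runs l (r, snd (last cs1))"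
    using assms(1,2) acc(2) by (simp add: runs_def is_run_conc)
qed

lemma runs_Cons:
  "runs l (p # r, m1) = (\<lambda>q. lift r \<circ> q) ` runs l ([p], m1) \<union>
    (\<Union>x\<in>pop_paths p m1. (\<lambda>q. map (lift r) (snd x) \<frown> q) ` runs l (r, fst x))"
  (is "?L = ?A \<union> ?B")
proof (intro equalityI subsetI)
  fix q assume q: "q \<in> ?L"
  then have "is_run (p # r, m1) q" by (simp add: runs_def)
  then have "(\<forall>t. \<exists>y. y \<noteq> [] \<and> fst (q t) = y @ r) \<or>
      (\<exists>cs1 q'. q = map (lift r) cs1 \<frown> q' \<and> cs1 \<noteq> [] \<and> fst (last cs1) = [] \<and> is_path ([p], m1) cs1)"
    using run_split[of "(p # r, m1)" q "[p]" r] by simp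
  then show "q \<in> ?A \<union> ?B"
  proof (elim disjE exE conjE)
    assume "\<forall>t. \<exists>y. y \<noteq> [] \<and> fst (q t) = y @ r"
    then show ?thesis using runs_above_bottom[OF q] by blast
  next
    fix cs1 q' assume h: "q = map (lift r) cs1 \<frown> q'" "cs1 \<noteq> []" "fst (last cs1) = []"
      "is_path ([p], m1) cs1"
    then show ?thesis using runs_through_pop[OF q h(1-3)] by force
  qed
next
  fix q assume "q \<in> ?A \<union> ?B"
  then show "q \<in> ?L"
  proof
    assume "q \<in> ?A"
    then obtain q' where "q' \<in> runs l ([p], m1)" "q = lift r \<circ> q'" by blast
    then show ?thesis
      using is_run_lift[of "([p], m1)" q' r] by (simp add: runs_def accepting_lift lift_def)
  next
    assume "q \<in> ?B"
    then obtain m2 cs q' where x: "(m2, cs) \<in> pop_paths p m1" and q': "q' \<in> runs l (r, m2)"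
      and q: "q = map (lift r) cs \<frown> q'" by auto
    show ?thesis
      using lift_pop_path[OF x, of r] pop_paths_D[OF x] q'
      unfolding q by (simp add: runs_def is_run_conc accepting_conc lift_def)
  qed
qed

lemma runs_lifted_through_pop_disjoint:
  assumes "x \<in> pop_paths p m1"
  shows "(\<lambda>q. lift r \<circ> q) ` runs l ([p], m1) \<inter> (\<lambda>q. map (lift r) (snd x) \<frown> q) ` B = {}"
proof -
  obtain m2 cs where x: "x = (m2, cs)" by (cases x)
  note d = pop_paths_D[OF assms[unfolded x]]
  have False if "q \<in> runs l ([p], m1)" "lift r \<circ> q = map (lift r) cs \<frown> q'" for q q'
  proof -
    let ?t = "length cs - 1"
    have "lift r (q ?t) = lift r (last cs)"
      using fun_cong[OF that(2), of ?t] d(1) by (simp add: last_conv_nth)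
    then have "fst (q ?t) = []" using d(2) by (simp add: lift_def)
    then show False using that(1) run_stack_nonempty by (auto simp: runs_def)
  qed
  then show ?thesis unfolding x by auto
qed

lemma runs_through_pop_disjoint:
  assumes "x \<in> pop_paths p m1" "y \<in> pop_paths p m1" "x \<noteq> y"
  shows "(\<lambda>q. map (lift r) (snd x) \<frown> q) ` A \<inter> (\<lambda>q. map (lift r) (snd y) \<frown> q) ` B = {}"
proof -
  have False if "map (lift r) (snd x) \<frown> a = map (lift r) (snd y) \<frown> b" for a b
  proof -
    let ?k = "length (snd x) + length (snd y)"
    have "prefix ?k (map (lift r) (snd x) \<frown> a) = prefix ?k (map (lift r) (snd y) \<frown> b)"
      using that by simp
    then have "map (lift r) (snd x) @ prefix (length (snd y)) a = map (lift r) (snd y) @ prefix (length (snd x)) b"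
      by (simp add: add.commute)
    then show False using pop_paths_prefix_unique[OF assms(1,2)] assms(3) by blast
  qed
  then show ?thesis by blast
qed

lemma gsum_lifted_runs:
  assumes "m1 \<in> states"
  shows "gsum \<sigma>V enc_cseq (\<lambda>q. iprod (run_weight (p # r, m1) q)) ((\<lambda>q. lift r \<circ> q) ` runs l ([p], m1)) =
    momega \<sigma>V iprod n l M [p] m1"
proof -
  have inj: "inj (\<lambda>q. lift r \<circ> q)"
  proof (rule injI)
    fix a b assume "lift r \<circ> a = lift r \<circ> b"
    then have "lift r (a t) = lift r (b t)" for t by (metis comp_apply)
    then show "a = b" using inj_lift by (auto simp: fun_eq_iff dest: injD)
  qed
  then have "gsum \<sigma>V enc_cseq (\<lambda>q. iprod (run_weight (p # r, m1) q)) ((\<lambda>q. lift r \<circ> q) ` runs l ([p], m1)) =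
      gsum \<sigma>V enc_cseq (\<lambda>q. iprod (run_weight (lift r ([p], m1)) (lift r \<circ> q))) (runs l ([p], m1))"
    by (subst V.gsum_reindex[where e' = enc_cseq]) (simp_all add: inj_on_subset[OF inj subset_UNIV] lift_def)
  also have "\<dots> = momega \<sigma>V iprod n l M [p] m1"
    using assms by (simp add: run_weight_lift momega_eq_gsum_runs cong: V.gsum_cong)
  finally show ?thesis .
qed

lemma gsum_runs_through_pop:
  assumes "(m2, cs) \<in> pop_paths p m1" "m1 \<in> states"
  shows "gsum \<sigma>V enc_cseq (\<lambda>q. iprod (run_weight (p # r, m1) q)) ((\<lambda>q. map (lift r) cs \<frown> q) ` runs l (r, m2)) =
    act (path_weight ([p], m1) cs) (momega \<sigma>V iprod n l M r m2)"
proof -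
  have "gsum \<sigma>V enc_cseq (\<lambda>q. iprod (run_weight (p # r, m1) q)) ((\<lambda>q. map (lift r) cs \<frown> q) ` runs l (r, m2)) =
      gsum \<sigma>V enc_cseq (\<lambda>q. iprod (run_weight (p # r, m1) (map (lift r) cs \<frown> q))) (runs l (r, m2))"
    by (subst V.gsum_reindex[where e' = enc_cseq]) (auto intro: inj_onI)
  also have "\<dots> = gsum \<sigma>V enc_cseq (\<lambda>q. act (path_weight ([p], m1) cs) (iprod (run_weight (r, m2) q))) (runs l (r, m2))"
    using lift_pop_path[OF assms(1)] path_weight_lift_pop_path[OF assms]
    by (simp add: iprod_run_weight_conc)
  also have "\<dots> = act (path_weight ([p], m1) cs) (momega \<sigma>V iprod n l M r m2)"
    using pop_paths_D[OF assms(1)] by (simp add: act_gsum momega_eq_gsum_runs)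
  finally show ?thesis .
qed

lemma momega_Cons:
  assumes "m1 \<in> states"
  shows "momega \<sigma>V iprod n l M (p # r) m1 = momega \<sigma>V iprod n l M [p] m1 +
     (\<Sum>m2\<in>states. act (mstar \<sigma>S n M [p] [] m1 m2) (momega \<sigma>V iprod n l M r m2))"
proof -
  let ?F = "\<lambda>q. iprod (run_weight (p # r, m1) q)"
  let ?A = "(\<lambda>q. lift r \<circ> q) ` runs l ([p], m1)"
  let ?Q = "\<lambda>x. (\<lambda>q. map (lift r) (snd x) \<frown> q) ` runs l (r, fst x)"
  have "momega \<sigma>V iprod n l M (p # r) m1 = gsum \<sigma>V enc_cseq ?F ?A + gsum \<sigma>V enc_cseq ?F (\<Union>x\<in>pop_paths p m1. ?Q x)"
    unfolding momega_eq_gsum_runs[OF assms] runs_Cons[of l p r m1]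
    by (rule V.gsum_Un_disjoint) (simp_all add: Int_UN_distrib runs_lifted_through_pop_disjoint)
  also have "gsum \<sigma>V enc_cseq ?F ?A = momega \<sigma>V iprod n l M [p] m1"
    by (rule gsum_lifted_runs[OF assms])
  also have "gsum \<sigma>V enc_cseq ?F (\<Union>x\<in>pop_paths p m1. ?Q x) =
      gsum \<sigma>V enc_cnt (\<lambda>x. gsum \<sigma>V enc_cseq ?F (?Q x)) (pop_paths p m1)"
    by (rule V.gsum_UN_disjoint) (simp_all add: runs_through_pop_disjoint)
  also have "\<dots> = gsum \<sigma>V enc_cnt (\<lambda>x. act (path_weight ([p], m1) (snd x)) (momega \<sigma>V iprod n l M r (fst x)))
      (pop_paths p m1)"
    using gsum_runs_through_pop[OF _ assms] by (intro V.gsum_cong) auto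
  also have "\<dots> = gsum \<sigma>V enc_cnt (\<lambda>m2. act (mstar \<sigma>S n M [p] [] m1 m2) (momega \<sigma>V iprod n l M r m2)) states"
    using V.gsum_Sigma[of enc_cnt states "\<lambda>m2. paths ([p], m1) ([], m2)" enc_cnt enc_cnt
        "\<lambda>x. act (path_weight ([p], m1) (snd x)) (momega \<sigma>V iprod n l M r (fst x))"]
    by (simp add: gsum_act mstar_eq_gsum_paths[OF assms])
  finally show ?thesis by (simp add: V.gsum_finite)
qed

definition chain_prod :: "'g list \<Rightarrow> nat list \<Rightarrow> nat \<Rightarrow> 's" where
  "chain_prod ps ms k = prod_list (map (\<lambda>t. mstar \<sigma>S n M [ps ! t] [] (ms ! t) (ms ! Suc t)) [0..<k])"

lemma chain_prod_0 [simp]: "chain_prod ps ms 0 = 1"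
  by (simp add: chain_prod_def)

lemma chain_prod_Cons:
  "chain_prod (p # ps) (m # ms) (Suc k) = mstar \<sigma>S n M [p] [] m (ms ! 0) * chain_prod ps ms k"
  unfolding chain_prod_def by (simp add: upt_conv_Cons map_Suc_upt[symmetric] o_def del: upt_Suc)

lemma mstar_chain:
  "ps \<noteq> [] \<Longrightarrow> m1 \<in> states \<Longrightarrow>
    mstar \<sigma>S n M ps [] m1 j = (\<Sum>ms\<in>state_lists n (length ps - 1). chain_prod ps (m1 # ms @ [j]) (length ps))"
proof (induction ps arbitrary: m1)
  case (Cons p ps')
  show ?case
  proof (cases "ps' = []")
    case True
    then show ?thesis by (simp add: chain_prod_def)
  next
    case False
    have "mstar \<sigma>S n M (p # ps') [] m1 j = (\<Sum>m2\<in>states. mstar \<sigma>S n M [p] [] m1 m2 * mstar \<sigma>S n M ps' [] m2 j)"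
      by (rule mstar_Cons[OF Cons.prems(2)])
    also have "\<dots> = (\<Sum>m2\<in>states. \<Sum>ms\<in>state_lists n (length ps' - 1).
        chain_prod (p # ps') (m1 # m2 # ms @ [j]) (Suc (length ps')))"
      using Cons.IH[OF False] by (simp add: sum_distrib_left chain_prod_Cons)
    also have "\<dots> = (\<Sum>ms\<in>state_lists n (length (p # ps') - 1). chain_prod (p # ps') (m1 # ms @ [j]) (length (p # ps')))"
      using False by (cases ps') (simp_all add: sum_state_lists_Suc)
    finally show ?thesis .
  qed
qed simp

lemma sum_mult_mstar:
  assumes "j \<in> states"
  shows "(\<Sum>m\<in>states. M [p] ps i m * mstar \<sigma>S n M ps [] m j) =
     (\<Sum>ms\<in>state_lists n (length ps). M [p] ps i ((ms @ [j]) ! 0) * chain_prod ps (ms @ [j]) (length ps))"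
proof (cases ps)
  case Nil
  have "(\<Sum>m\<in>states. M [p] [] i m * mstar \<sigma>S n M [] [] m j) = (\<Sum>m\<in>states. if m = j then M [p] [] i m else 0)"
    by (rule sum.cong) (auto simp: mstar_Nil)
  then show ?thesis using Nil assms by (simp add: sum.delta')
next
  case (Cons a ps')
  then show ?thesis by (simp add: sum_state_lists_Suc mstar_chain sum_distrib_left)
qed

lemma momega_chain:
  "ps \<noteq> [] \<Longrightarrow> m1 \<in> states \<Longrightarrow> momega \<sigma>V iprod n l M ps m1 =
     (\<Sum>j<length ps. \<Sum>ms\<in>state_lists n j.
        act (chain_prod ps (m1 # ms) j) (momega \<sigma>V iprod n l M [ps ! j] ((m1 # ms) ! j)))"
proof (induction ps arbitrary: m1)
  case (Cons p ps')
  show ?case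
  proof (cases "ps' = []")
    case True
    then show ?thesis by simp
  next
    case False
    let ?G = "\<lambda>j. \<Sum>ms\<in>state_lists n j. act (chain_prod (p # ps') (m1 # ms) j)
      (momega \<sigma>V iprod n l M [(p # ps') ! j] ((m1 # ms) ! j))"
    have "(\<Sum>m2\<in>states. act (mstar \<sigma>S n M [p] [] m1 m2) (momega \<sigma>V iprod n l M ps' m2)) =
        (\<Sum>m2\<in>states. \<Sum>j<length ps'. \<Sum>ms\<in>state_lists n j.
          act (chain_prod (p # ps') (m1 # m2 # ms) (Suc j)) (momega \<sigma>V iprod n l M [ps' ! j] ((m2 # ms) ! j)))"
      by (intro sum.cong refl) (simp add: Cons.IH[OF False] act_sum act_mult chain_prod_Cons)
    also have "\<dots> = (\<Sum>j<length ps'. ?G (Suc j))"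
      by (subst sum.swap) (simp add: sum_state_lists_Suc)
    finally have tail: "(\<Sum>m2\<in>states. act (mstar \<sigma>S n M [p] [] m1 m2) (momega \<sigma>V iprod n l M ps' m2)) =
      (\<Sum>j<length ps'. ?G (Suc j))" .
    have head: "momega \<sigma>V iprod n l M [p] m1 = ?G 0" by simp
    show ?thesis
      unfolding momega_Cons[OF Cons.prems(2), where p = p and r = ps'] tail head length_Cons sum.lessThan_Suc_shift ..
  qed
qed simp

lemma sum_act_momega:
  assumes "ps \<noteq> []"
  shows "(\<Sum>m\<in>states. act (M [p] ps i m) (momega \<sigma>V iprod n l M ps m)) =
     (\<Sum>j<length ps. \<Sum>ms\<in>state_lists n (Suc j).
        act (M [p] ps i (ms ! 0) * chain_prod ps ms j) (momega \<sigma>V iprod n l M [ps ! j] (ms ! j)))"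
proof -
  have "(\<Sum>m\<in>states. act (M [p] ps i m) (momega \<sigma>V iprod n l M ps m)) =
     (\<Sum>m\<in>states. \<Sum>j<length ps. \<Sum>ms\<in>state_lists n j.
        act (M [p] ps i m * chain_prod ps (m # ms) j) (momega \<sigma>V iprod n l M [ps ! j] ((m # ms) ! j)))"
    using assms by (intro sum.cong refl) (simp add: momega_chain act_sum act_mult)
  also have "\<dots> = (\<Sum>j<length ps. \<Sum>ms\<in>state_lists n (Suc j).
        act (M [p] ps i (ms ! 0) * chain_prod ps ms j) (momega \<sigma>V iprod n l M [ps ! j] (ms ! j)))"
    by (subst sum.swap) (simp add: sum_state_lists_Suc)
  finally show ?thesis .
qed

lemma mstar_equation:
  assumes "i \<in> states" "j \<in> states"
  shows "mstar \<sigma>S n M [p] [] i j =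
    gsum \<sigma>S enc_cnt
      (\<lambda>k. \<Sum>ps\<in>{ps. length ps = k}. \<Sum>ms\<in>{ms. length ms = k \<and> set ms \<subseteq> {1..n}}.
         M [p] ps i ((ms @ [j]) ! 0) *
         prod_list (map (\<lambda>t. mstar \<sigma>S n M [ps ! t] [] (ms ! t) ((ms @ [j]) ! Suc t)) [0..<k]))
      UNIV"
proof -
  have chain: "chain_prod ps (ms @ [j]) k =
      prod_list (map (\<lambda>t. mstar \<sigma>S n M [ps ! t] [] (ms ! t) ((ms @ [j]) ! Suc t)) [0..<k])"
    if "length ms = k" for ps ms k
    unfolding chain_prod_def using that by (intro arg_cong[where f = prod_list] map_cong) (auto simp: nth_append)
  have "mstar \<sigma>S n M [p] [] i j =
      gsum \<sigma>S enc_cnt (\<lambda>k. \<Sum>ps\<in>{ps. length ps = k}. \<Sum>m\<in>states. M [p] ps i m * mstar \<sigma>S n M ps [] m j) UNIV"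
    by (subst mstar_unfold) (simp_all add: S.gsum_lists_by_length)
  also have "\<dots> = gsum \<sigma>S enc_cnt
      (\<lambda>k. \<Sum>ps\<in>{ps. length ps = k}. \<Sum>ms\<in>{ms. length ms = k \<and> set ms \<subseteq> {1..n}}.
         M [p] ps i ((ms @ [j]) ! 0) *
         prod_list (map (\<lambda>t. mstar \<sigma>S n M [ps ! t] [] (ms ! t) ((ms @ [j]) ! Suc t)) [0..<k]))
      UNIV"
  proof (rule S.gsum_cong, rule sum.cong[OF refl])
    fix k ps assume "ps \<in> {ps :: 'g list. length ps = k}"
    then show "(\<Sum>m\<in>states. M [p] ps i m * mstar \<sigma>S n M ps [] m j) =
      (\<Sum>ms\<in>{ms. length ms = k \<and> set ms \<subseteq> {1..n}}. M [p] ps i ((ms @ [j]) ! 0) *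
         prod_list (map (\<lambda>t. mstar \<sigma>S n M [ps ! t] [] (ms ! t) ((ms @ [j]) ! Suc t)) [0..<k]))"
      using sum_mult_mstar[OF assms(2), of p ps i] unfolding state_lists_def
      by (auto simp: chain intro!: sum.cong)
  qed
  finally show ?thesis .
qed

lemma momega_equation:
  assumes "i \<in> states"
  shows "momega \<sigma>V iprod n l M [p] i =
    gsum \<sigma>V enc_cnt
      (\<lambda>k. \<Sum>ps\<in>{ps. length ps = k}. \<Sum>j\<in>{1..k}. \<Sum>ms\<in>{ms. length ms = j \<and> set ms \<subseteq> {1..n}}.
         act (M [p] ps i (ms ! 0) *
              prod_list (map (\<lambda>t. mstar \<sigma>S n M [ps ! t] [] (ms ! t) (ms ! Suc t)) [0..<j - 1]))
             (momega \<sigma>V iprod n l M [ps ! (j - 1)] (ms ! (j - 1))))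
      {1..}"
proof -
  let ?f = "\<lambda>k. \<Sum>ps\<in>{ps :: 'g list. length ps = k}. \<Sum>m\<in>states. act (M [p] ps i m) (momega \<sigma>V iprod n l M ps m)"
  have "momega \<sigma>V iprod n l M [p] i = gsum \<sigma>V enc_cnt ?f UNIV"
    by (subst momega_unfold) (simp add: V.gsum_lists_by_length)
  also have "\<dots> = gsum \<sigma>V enc_cnt ?f {1..}"
  proof (rule V.gsum_mono_neutral)
    fix k :: nat assume "k \<in> UNIV - {1..}"
    then have "k = 0" by simp
    then have "{ps :: 'g list. length ps = k} = {[]}" by auto
    then show "?f k = 0" by (simp add: momega_Nil)
  qed simp_all
  also have "\<dots> = gsum \<sigma>V enc_cnt
      (\<lambda>k. \<Sum>ps\<in>{ps. length ps = k}. \<Sum>j\<in>{1..k}. \<Sum>ms\<in>{ms. length ms = j \<and> set ms \<subseteq> {1..n}}.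
         act (M [p] ps i (ms ! 0) *
              prod_list (map (\<lambda>t. mstar \<sigma>S n M [ps ! t] [] (ms ! t) (ms ! Suc t)) [0..<j - 1]))
             (momega \<sigma>V iprod n l M [ps ! (j - 1)] (ms ! (j - 1))))
      {1..}"
  proof (rule V.gsum_cong, rule sum.cong[OF refl])
    fix k ps assume "k \<in> {1..}" "ps \<in> {ps :: 'g list. length ps = k}"
    then have "ps \<noteq> []" "length ps = k" by auto
    then show "(\<Sum>m\<in>states. act (M [p] ps i m) (momega \<sigma>V iprod n l M ps m)) =
      (\<Sum>j\<in>{1..k}. \<Sum>ms\<in>{ms. length ms = j \<and> set ms \<subseteq> {1..n}}.
         act (M [p] ps i (ms ! 0) *
              prod_list (map (\<lambda>t. mstar \<sigma>S n M [ps ! t] [] (ms ! t) (ms ! Suc t)) [0..<j - 1]))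
             (momega \<sigma>V iprod n l M [ps ! (j - 1)] (ms ! (j - 1))))"
      using sum_act_momega[of ps p i] unfolding state_lists_def chain_prod_def
      by (simp add: sum.atLeast1_atMost_eq)
  qed
  finally show ?thesis .
qed

end

theorem theorem13:
  fixes \<sigma>S :: "(idx \<Rightarrow> 's::semiring_1) \<Rightarrow> idx set \<Rightarrow> 's"
    and \<sigma>V :: "(idx \<Rightarrow> 'v::comm_monoid_add) \<Rightarrow> idx set \<Rightarrow> 'v"
    and act :: "'s \<Rightarrow> 'v \<Rightarrow> 'v"
    and iprod :: "(nat \<Rightarrow> 's) \<Rightarrow> 'v"
    and S' :: "'s set"
    and n :: nat
    and M :: "'g::finite list \<Rightarrow> 'g list \<Rightarrow> nat \<Rightarrow> nat \<Rightarrow> 's"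
    and I P :: "nat \<Rightarrow> 's"
    and p0 :: 'g
    and l :: nat
  assumes pair: "complete_ssp \<sigma>S \<sigma>V act iprod"
    and S'01: "0 \<in> S'" "1 \<in> S'"
    and aut: "omega_pda S' n M I P p0 l"
  shows
    "fst (pda_behavior \<sigma>S \<sigma>V act iprod n M I P p0 l) =
       (\<Sum>m1\<in>{1..n}. \<Sum>m2\<in>{1..n}. I m1 * mstar \<sigma>S n M [p0] [] m1 m2 * P m2)
   \<and> (\<forall>p. \<forall>i\<in>{1..n}. \<forall>j\<in>{1..n}.
        mstar \<sigma>S n M [p] [] i j =
        gsum \<sigma>S enc_cnt
          (\<lambda>k. \<Sum>ps\<in>{ps. length ps = k}. \<Sum>ms\<in>{ms. length ms = k \<and> set ms \<subseteq> {1..n}}.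
             M [p] ps i ((ms @ [j]) ! 0) *
             prod_list (map (\<lambda>t. mstar \<sigma>S n M [ps ! t] [] (ms ! t) ((ms @ [j]) ! Suc t)) [0..<k]))
          UNIV)
   \<and> snd (pda_behavior \<sigma>S \<sigma>V act iprod n M I P p0 l) =
       (\<Sum>m\<in>{1..n}. act (I m) (momega \<sigma>V iprod n l M [p0] m))
   \<and> (\<forall>p. \<forall>i\<in>{1..n}.
        momega \<sigma>V iprod n l M [p] i =
        gsum \<sigma>V enc_cnt
          (\<lambda>k. \<Sum>ps\<in>{ps. length ps = k}. \<Sum>j\<in>{1..k}. \<Sum>ms\<in>{ms. length ms = j \<and> set ms \<subseteq> {1..n}}.
             act (M [p] ps i (ms ! 0) *
                  prod_list (map (\<lambda>t. mstar \<sigma>S n M [ps ! t] [] (ms ! t) (ms ! Suc t)) [0..<j - 1]))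
                 (momega \<sigma>V iprod n l M [ps ! (j - 1)] (ms ! (j - 1))))
          {1..})
   \<and> pda_behavior \<sigma>S \<sigma>V act iprod n M I P p0 l =
       ((\<Sum>j\<in>{1..n}. (\<Sum>m\<in>{1..n}. I m * mstar \<sigma>S n M [p0] [] m j) * P j),
        (\<Sum>m\<in>{1..n}. act (I m) (momega \<sigma>V iprod n l M [p0] m)))"
proof -
  \<comment> \<open>Only the pushdown shape of M matters; the entries need not lie in S'.\<close>
  interpret pushdown_system \<sigma>S \<sigma>V act iprod n M
    using pair aut by unfold_locales (simp_all add: omega_pda_def)
  have "fst (pda_behavior \<sigma>S \<sigma>V act iprod n M I P p0 l) =
      (\<Sum>m1\<in>{1..n}. \<Sum>m2\<in>{1..n}. I m1 * mstar \<sigma>S n M [p0] [] m1 m2 * P m2)"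
    unfolding pda_behavior_def by (simp add: sum_distrib_right) (rule sum.swap)
  then show ?thesis
    using mstar_equation momega_equation by (simp add: pda_behavior_def)
qed

end
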